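(* Let $\Omega\subset\mathbb{R}^n$ be a domain that is star-shaped with respect to a point $x^*\in\Omega$, and let $g\in C(\Omega)$. Define $u:\Omega\to\mathbb{R}$ by \[ u(x)=\max\{ g(y) \mid y = x^* + t(x-x^* )\in\Omega,\ t\in[0,1]\}. \] Then $u$ is star-shaped with respect to $x^*$ and $u=SS^+(g)$.
   Context: A set $S\subset\mathbb{R}^n$ is star-shaped with respect to $x^*$ if $x\in S$ implies $tx^*+(1-t)x\in S$ for all $t\in[0,1]$. A function $v:\Omega\to\mathbb{R}$ is star-shaped with respect to $x^*$ if each sublevel set $\{x\in\Omega: v(x)\le\alpha\}$, $\alpha\in\mathbb{R}$, is star-shaped with respect to $x^*$. The upper star-shaped envelope of $g$ with respect to $x^*$ is $SS^+(g)(x)=\inf\{v(x) \mid v:\Omega\to\mathbb{R} \text{ star-shaped with respect to } x^*,\ v\ge g \text{ on } \Omega\}$. *)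

theory Defs
  imports "HOL-Analysis.Analysis"
begin

definition star_shaped_set :: "'a::real_vector set \<Rightarrow> 'a \<Rightarrow> bool" where
  "star_shaped_set S xs \<longleftrightarrow>
     (\<forall>x\<in>S. \<forall>t\<in>{0..1::real}. t *\<^sub>R xs + (1 - t) *\<^sub>R x \<in> S)"

definition star_shaped_fun :: "'a::real_vector set \<Rightarrow> 'a \<Rightarrow> ('a \<Rightarrow> real) \<Rightarrow> bool" where
  "star_shaped_fun \<Omega> xs v \<longleftrightarrow>
     (\<forall>\<alpha>::real. star_shaped_set {x\<in>\<Omega>. v x \<le> \<alpha>} xs)"

definition upper_ss_envelope :: "'a::real_vector set \<Rightarrow> 'a \<Rightarrow> ('a \<Rightarrow> real) \<Rightarrow> 'a \<Rightarrow> real" where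
  "upper_ss_envelope \<Omega> xs g x =
     Inf {v x | v. star_shaped_fun \<Omega> xs v \<and> (\<forall>y\<in>\<Omega>. g y \<le> v y)}"

end

theory Submission
  imports Defs
begin

(* Along each segment from xs to x, the value u x is the maximum of g over that segment, which
   is attained because the segment is compact and g continuous. Shrinking x towards xs shrinks
   the segment, so u is nondecreasing along rays from xs, which is exactly star-shapedness of u.
   Conversely, every star-shaped majorant v of g is nondecreasing along such rays, so v x dominates
   g on the whole segment and in particular u x: u is the least star-shaped majorant. *)

lemma closed_segment_eq_image_reversed:
  "closed_segment a x = (\<lambda>t. t *\<^sub>R a + (1 - t) *\<^sub>R x) ` {0..1}"
proof -
  have "closed_segment a x = (\<lambda>u. (1 - u) *\<^sub>R x + u *\<^sub>R a) ` {0..1}"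
    by (subst closed_segment_commute) (rule closed_segment_image_interval)
  also have "(\<lambda>u. (1 - u) *\<^sub>R x + u *\<^sub>R a) = (\<lambda>t. t *\<^sub>R a + (1 - t) *\<^sub>R x)"
    by (simp add: fun_eq_iff add.commute)
  finally show ?thesis .
qed

lemma star_shaped_set_iff_closed_segment:
  "star_shaped_set S a \<longleftrightarrow> (\<forall>x\<in>S. closed_segment a x \<subseteq> S)"
  unfolding star_shaped_set_def closed_segment_eq_image_reversed by (simp add: image_subset_iff)

lemma star_shaped_fun_iff_mono_on_closed_segment:
  assumes "star_shaped_set \<Omega> a"
  shows "star_shaped_fun \<Omega> a v \<longleftrightarrow> (\<forall>x\<in>\<Omega>. \<forall>y\<in>closed_segment a x. v y \<le> v x)"
proof
  assume "star_shaped_fun \<Omega> a v"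
  then have "closed_segment a x \<subseteq> {y\<in>\<Omega>. v y \<le> v x}" if "x \<in> \<Omega>" for x
    using that by (simp add: star_shaped_fun_def star_shaped_set_iff_closed_segment)
  then show "\<forall>x\<in>\<Omega>. \<forall>y\<in>closed_segment a x. v y \<le> v x"
    by blast
next
  assume "\<forall>x\<in>\<Omega>. \<forall>y\<in>closed_segment a x. v y \<le> v x"
  moreover have "\<forall>x\<in>\<Omega>. closed_segment a x \<subseteq> \<Omega>"
    using assms star_shaped_set_iff_closed_segment by blast
  ultimately show "star_shaped_fun \<Omega> a v"
    unfolding star_shaped_fun_def star_shaped_set_iff_closed_segment by fastforce
qed

lemma star_shaped_majorant_ge_closed_segment:
  assumes "star_shaped_set \<Omega> a" "star_shaped_fun \<Omega> a v" "\<forall>y\<in>\<Omega>. g y \<le> v y"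
    and "x \<in> \<Omega>" "y \<in> closed_segment a x"
  shows "g y \<le> v x"
proof -
  have "y \<in> \<Omega>"
    using assms(1,4,5) star_shaped_set_iff_closed_segment by blast
  then have "g y \<le> v y"
    using assms(3) by blast
  also have "v y \<le> v x"
    using assms star_shaped_fun_iff_mono_on_closed_segment by blast
  finally show ?thesis .
qed

lemma upper_ss_envelope_eqI:
  assumes "star_shaped_fun \<Omega> a u" "\<forall>y\<in>\<Omega>. g y \<le> u y"
    and "\<And>v. star_shaped_fun \<Omega> a v \<Longrightarrow> \<forall>y\<in>\<Omega>. g y \<le> v y \<Longrightarrow> u x \<le> v x"
  shows "upper_ss_envelope \<Omega> a g x = u x"
  unfolding upper_ss_envelope_def using assms by (intro cInf_eq_minimum) auto

lemma bdd_above_image_compact: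
  fixes g :: "'a::topological_space \<Rightarrow> real"
  assumes "compact K" "continuous_on K g"
  shows "bdd_above (g ` K)"
  using assms by (intro bounded_imp_bdd_above compact_imp_bounded compact_continuous_image)

lemma Sup_image_compact_in_image:
  fixes g :: "'a::topological_space \<Rightarrow> real"
  assumes "compact K" "K \<noteq> {}" "continuous_on K g"
  shows "Sup (g ` K) \<in> g ` K"
  using assms by (intro closed_contains_Sup compact_imp_closed bdd_above_image_compact
      compact_continuous_image) auto

lemma Sup_image_closed_segment_mono:
  fixes g :: "'a::real_normed_vector \<Rightarrow> real"
  assumes "continuous_on (closed_segment a x) g" "y \<in> closed_segment a x"
  shows "Sup (g ` closed_segment a y) \<le> Sup (g ` closed_segment a x)"
proof (rule cSup_subset_mono)
  show "bdd_above (g ` closed_segment a x)"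
    using assms(1) by (intro bdd_above_image_compact) auto
  show "g ` closed_segment a y \<subseteq> g ` closed_segment a x"
    using assms(2) by (intro image_mono) (simp add: subset_closed_segment)
qed auto

lemma segment_values_eq_image_closed_segment:
  assumes "star_shaped_set \<Omega> a" "x \<in> \<Omega>"
  shows "{g y | y t. y = a + t *\<^sub>R (x - a) \<and> y \<in> \<Omega> \<and> t \<in> {0..1}} = g ` closed_segment a x"
proof -
  have "closed_segment a x \<subseteq> \<Omega>"
    using assms star_shaped_set_iff_closed_segment by blast
  moreover have "closed_segment a x = (\<lambda>t. a + t *\<^sub>R (x - a)) ` {0..1}"
    by (simp add: closed_segment_image_interval algebra_simps)
  ultimately show ?thesis
    by blast
qed

lemma continuous_on_closed_segment_star_shaped:
  assumes "star_shaped_set \<Omega> a" "continuous_on \<Omega> g" "x \<in> \<Omega>"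
  shows "continuous_on (closed_segment a x) g"
  using assms(1,3)
  by (intro continuous_on_subset[OF assms(2)]) (simp add: star_shaped_set_iff_closed_segment)

lemma star_shaped_fun_Sup_image_closed_segment:
  fixes g :: "'a::real_normed_vector \<Rightarrow> real"
  assumes "star_shaped_set \<Omega> a" "continuous_on \<Omega> g"
    and "\<And>x. x \<in> \<Omega> \<Longrightarrow> u x = Sup (g ` closed_segment a x)"
  shows "star_shaped_fun \<Omega> a u"
  unfolding star_shaped_fun_iff_mono_on_closed_segment[OF assms(1)]
proof (intro ballI)
  fix x y assume x: "x \<in> \<Omega>" and y: "y \<in> closed_segment a x"
  then have "y \<in> \<Omega>"
    using assms(1) by (auto simp: star_shaped_set_iff_closed_segment)
  then show "u y \<le> u x"
    using Sup_image_closed_segment_mono[OF continuous_on_closed_segment_star_shaped[OF assms(1,2) x] y]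
    by (simp only: assms(3) x)
qed

lemma upper_ss_envelope_eq_Sup_image_closed_segment:
  fixes g :: "'a::real_normed_vector \<Rightarrow> real"
  assumes "star_shaped_set \<Omega> a" "continuous_on \<Omega> g"
    and u: "\<And>x. x \<in> \<Omega> \<Longrightarrow> u x = Sup (g ` closed_segment a x)" and x: "x \<in> \<Omega>"
  shows "upper_ss_envelope \<Omega> a g x = u x"
proof (rule upper_ss_envelope_eqI)
  show "star_shaped_fun \<Omega> a u"
    using assms(1,2) u by (rule star_shaped_fun_Sup_image_closed_segment)
  show "\<forall>y\<in>\<Omega>. g y \<le> u y"
  proof
    fix y assume y: "y \<in> \<Omega>"
    show "g y \<le> u y"
      unfolding u[OF y] using continuous_on_closed_segment_star_shaped[OF assms(1,2) y]
      by (intro cSup_upper bdd_above_image_compact) auto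
  qed
  fix v assume v: "star_shaped_fun \<Omega> a v" "\<forall>y\<in>\<Omega>. g y \<le> v y"
  have "u x \<in> g ` closed_segment a x"
    unfolding u[OF x] using continuous_on_closed_segment_star_shaped[OF assms(1,2) x]
    by (intro Sup_image_compact_in_image) auto
  then obtain y where "y \<in> closed_segment a x" "u x = g y"
    by blast
  then show "u x \<le> v x"
    using star_shaped_majorant_ge_closed_segment[OF assms(1) v x] by simp
qed

theorem proposition2p11:
  fixes \<Omega> :: "'a::euclidean_space set" and xs :: 'a and g :: "'a \<Rightarrow> real"
    and u :: "'a \<Rightarrow> real"
  assumes "open \<Omega>" and "connected \<Omega>" and "xs \<in> \<Omega>"
    and "star_shaped_set \<Omega> xs"
    and "continuous_on \<Omega> g"
    and "\<And>x. x \<in> \<Omega> \<Longrightarrow>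
           u x = Sup {g y | y t. y = xs + t *\<^sub>R (x - xs) \<and> y \<in> \<Omega> \<and> t \<in> {0..1}}"
  shows "(\<forall>x\<in>\<Omega>. u x \<in> {g y | y t. y = xs + t *\<^sub>R (x - xs) \<and> y \<in> \<Omega> \<and> t \<in> {0..1}})
         \<and> star_shaped_fun \<Omega> xs u
         \<and> (\<forall>x\<in>\<Omega>. u x = upper_ss_envelope \<Omega> xs g x)"
proof -
  note values_eq = segment_values_eq_image_closed_segment[OF assms(4)]
  have u_eq: "u x = Sup (g ` closed_segment xs x)" if "x \<in> \<Omega>" for x
    using assms(6)[OF that] unfolding values_eq[OF that] .
  have "u x \<in> {g y | y t. y = xs + t *\<^sub>R (x - xs) \<and> y \<in> \<Omega> \<and> t \<in> {0..1}}"
    if "x \<in> \<Omega>" for x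
    unfolding values_eq[OF that] u_eq[OF that]
    using continuous_on_closed_segment_star_shaped[OF assms(4,5) that]
    by (intro Sup_image_compact_in_image) auto
  moreover have "star_shaped_fun \<Omega> xs u"
    using assms(4,5) u_eq by (rule star_shaped_fun_Sup_image_closed_segment)
  moreover have "u x = upper_ss_envelope \<Omega> xs g x" if "x \<in> \<Omega>" for x
    using upper_ss_envelope_eq_Sup_image_closed_segment[OF assms(4,5) u_eq that] by simp
  ultimately show ?thesis
    by blast
qed

end
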